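(* There are infinitely many $\mathbb{Q}$-rational points on $O$. More precisely, let $Q\subset\mathbf{P}^4$ be the quadric surface given by $l=q=0$, where $$l:=x_0+x_1+x_2-3x_3-3x_4,$$ $$q:=x_0^2+x_1^2+x_2^2+9x_3^2-x_0x_1-x_0x_2-3x_0x_3-x_1x_2-3x_1x_3-3x_2x_3.$$ Then the double covering $\pi:O\to\mathbf{P}^4_{\mathbb{Q}}$ splits over $Q$; in particular, there are one or two $\mathbb{Q}$-rational points of $O$ above each $\mathbb{Q}$-rational point of $Q$.
   Context: Let $$\Delta'(x_0,\ldots,x_4):=\prod_{i_1,\ldots,i_4\in\{0,1\}}\big(\sqrt{x_0}+(-1)^{i_1}\sqrt{x_1}+(-1)^{i_2}\sqrt{x_2}+(-1)^{i_3}\sqrt{x_3}+(-1)^{i_4}\sqrt{x_4}\big)\in\mathbb{Q}[x_0,\ldots,x_4]$$ (symmetric, degree $8$). $O$ is the double covering $\pi:O\to\mathbf{P}^4_{\mathbb{Q}}$ given by $w^2=(-3)\Delta'(x_0,\ldots,x_4)$ (a hypersurface in $\mathbf{P}(4,1,1,1,1,1)$). "Splits over $Q$" means that $\pi^{-1}(Q)\to Q$ is a trivial double covering, i.e. $(-3)\Delta'$ restricted to $Q$ is a square. *)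

theory Defs
  imports Complex_Main
begin

text \<open>Points of affine 5-space are functions nat => _, only indices 0..4 matter.\<close>

definition DeltaP :: "(nat \<Rightarrow> complex) \<Rightarrow> complex" where
  "DeltaP x = (\<Prod>S\<in>Pow {1..4::nat}.
      csqrt (x 0) + (\<Sum>j\<in>{1..4::nat}. (if j \<in> S then -1 else 1) * csqrt (x j)))"

definition lform :: "(nat \<Rightarrow> 'a::comm_ring_1) \<Rightarrow> 'a" where
  "lform x = x 0 + x 1 + x 2 - 3 * x 3 - 3 * x 4"

definition qform :: "(nat \<Rightarrow> 'a::comm_ring_1) \<Rightarrow> 'a" where
  "qform x = (x 0)^2 + (x 1)^2 + (x 2)^2 + 9 * (x 3)^2 - x 0 * x 1 - x 0 * x 2
     - 3 * x 0 * x 3 - x 1 * x 2 - 3 * x 1 * x 3 - 3 * x 2 * x 3"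

definition monos5 :: "nat \<Rightarrow> (nat \<Rightarrow> nat) set" where
  "monos5 d = {e. (\<forall>i\<ge>5. e i = 0) \<and> sum e {..<5} = d}"

definition form_eval :: "nat \<Rightarrow> ((nat \<Rightarrow> nat) \<Rightarrow> rat) \<Rightarrow> (nat \<Rightarrow> complex) \<Rightarrow> complex" where
  "form_eval d c x = (\<Sum>e\<in>monos5 d. of_rat (c e) * (\<Prod>i<5. x i ^ e i))"

text \<open>Q-rational points of O in P(4,1,1,1,1,1): classes of (w,x) with x nonzero, w^2 = -3 Delta'(x),
  modulo (w,x) ~ (mu^4 w, mu x), mu in Q nonzero.\<close>
definition O_rat_points :: "(rat \<times> (nat \<Rightarrow> rat)) set set" where
  "O_rat_points = {{(\<mu>^4 * w, \<lambda>i. \<mu> * x i) | \<mu>. \<mu> \<noteq> 0} | w x.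
      (\<forall>i\<ge>5. x i = 0) \<and> (\<exists>i<5. x i \<noteq> 0) \<and>
      (of_rat w)^2 = -3 * DeltaP (\<lambda>i. of_rat (x i))}"

end

theory Submission
  imports Defs "HOL-Library.More_List"
begin

text \<open>On the hyperplane \<open>l = 0\<close> the equation \<open>q = 0\<close> says that the elementary symmetric
  functions of \<open>x0, x1, x2\<close> are \<open>e1 = 3s\<close> and \<open>e2 = 3(s^2 - p)\<close>, where \<open>s = x3 + x4\<close>
  and \<open>p = x3 x4\<close>. Grouping the sixteen factors of \<open>Delta'\<close> according to the sign of
  \<open>sqrt x3 + sqrt x4\<close> and \<open>sqrt x3 - sqrt x4\<close>, the classical formula for the product of the
  eight sums \<open>sqrt y0 +- sqrt y1 +- sqrt y2 +- sqrt y3\<close> writes \<open>Delta'\<close> as a product of two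
  polynomials, and substituting \<open>e1, e2\<close> gives \<open>Delta' = 4096 (x3 - x4)^2 K\<close> with
  \<open>K = (x3^3 + x4^3 - x0 x1 x2)^2 - 4 p^3\<close>. The same substitution turns the discriminant
  \<open>((x0 - x1)(x0 - x2)(x1 - x2))^2\<close> of the cubic with roots \<open>x0, x1, x2\<close> into \<open>-27 K\<close>, so
  \<open>-3 Delta'\<close> is the square of the quartic form \<open>64/3 (x0 - x1)(x0 - x2)(x1 - x2)(x3 - x4)\<close>.
  Lines through the rational point \<open>(4,1,1,1,1)\<close> of \<open>Q\<close> give infinitely many rational
  points on \<open>Q\<close>, hence on \<open>O\<close>.\<close>

definition signed_sum_prod :: "'a::comm_ring_1 \<Rightarrow> (nat \<Rightarrow> 'a) \<Rightarrow> nat set \<Rightarrow> 'a" where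
  "signed_sum_prod t a A = (\<Prod>S\<in>Pow A. t + (\<Sum>j\<in>A. (if j \<in> S then -1 else 1) * a j))"

lemma signed_sum_prod_empty [simp]: "signed_sum_prod t a {} = t"
  by (simp add: signed_sum_prod_def)

lemma signed_sum_prod_insert:
  assumes "finite A" and "j \<notin> A"
  shows "signed_sum_prod t a (insert j A) = signed_sum_prod (t + a j) a A * signed_sum_prod (t - a j) a A"
proof -
  let ?f = "\<lambda>S. t + (\<Sum>i\<in>insert j A. (if i \<in> S then -1 else 1) * a i)"
  have inj: "inj_on (insert j) (Pow A)"
    using assms(2) unfolding inj_on_def by (metis PowD insert_ident subsetD)
  have "signed_sum_prod t a (insert j A) = prod ?f (Pow A) * prod ?f (insert j ` Pow A)"
    unfolding signed_sum_prod_def Pow_insert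
    using assms by (intro prod.union_disjoint) auto
  also have "prod ?f (Pow A) = signed_sum_prod (t + a j) a A"
    unfolding signed_sum_prod_def
    using assms by (intro prod.cong) (auto simp: sum.insert_if algebra_simps)
  also have "prod ?f (insert j ` Pow A) = signed_sum_prod (t - a j) a A"
    unfolding signed_sum_prod_def prod.reindex[OF inj] o_def
  proof (rule prod.cong[OF refl])
    fix S assume "S \<in> Pow A"
    have "(\<Sum>i\<in>A. (if i \<in> insert j S then -1 else 1) * a i) = (\<Sum>i\<in>A. (if i \<in> S then -1 else 1) * a i)"
      using assms(2) by (intro sum.cong) auto
    then show "?f (insert j S) = t - a j + (\<Sum>i\<in>A. (if i \<in> S then -1 else 1) * a i)"
      using assms by simp
  qed
  finally show ?thesis .
qed

lemma signed_sum_prod_pair: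
  assumes "j \<noteq> k"
  shows "signed_sum_prod t a {j, k} = (t + a j + a k) * (t + a j - a k) * (t - a j + a k) * (t - a j - a k)"
  using assms by (simp add: signed_sum_prod_insert algebra_simps)

lemma signed_sum_prod_four:
  fixes a :: "nat \<Rightarrow> 'a::comm_ring_1"
  shows "signed_sum_prod t a {1..4} =
    (signed_sum_prod (t + (a 3 + a 4)) a {1, 2} * signed_sum_prod (t - (a 3 + a 4)) a {1, 2}) *
    (signed_sum_prod (t + (a 3 - a 4)) a {1, 2} * signed_sum_prod (t - (a 3 - a 4)) a {1, 2})"
proof -
  have "{1..4::nat} = insert 4 (insert 3 {1, 2})" by auto
  moreover have "signed_sum_prod t a (insert 4 (insert 3 {1, 2})) =
      signed_sum_prod (t + a 4 + a 3) a {1, 2} * signed_sum_prod (t + a 4 - a 3) a {1, 2} *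
      (signed_sum_prod (t - a 4 + a 3) a {1, 2} * signed_sum_prod (t - a 4 - a 3) a {1, 2})"
    by (simp add: signed_sum_prod_insert)
  moreover have "t + a 4 + a 3 = t + (a 3 + a 4)" "t + a 4 - a 3 = t - (a 3 - a 4)"
    "t - a 4 + a 3 = t + (a 3 - a 4)" "t - a 4 - a 3 = t - (a 3 + a 4)"
    by (simp_all add: algebra_simps)
  ultimately show ?thesis by (simp only: mult_ac)
qed

definition four_root_norm :: "'a::comm_ring_1 \<Rightarrow> 'a \<Rightarrow> 'a \<Rightarrow> 'a \<Rightarrow> 'a" where
  "four_root_norm y0 y1 y2 y3 =
     (y0^2 + y1^2 + y2^2 + y3^2 - 2 * (y0*y1 + y0*y2 + y0*y3 + y1*y2 + y1*y3 + y2*y3))^2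
     - 64 * y0 * y1 * y2 * y3"

lemma prod_signed_sums_four_roots:
  fixes a b c d :: "'a::idom"
  shows "(a + b + c + d) * (a + b + c - d) * (a + b - c + d) * (a + b - c - d)
       * (a - b + c + d) * (a - b + c - d) * (a - b - c + d) * (a - b - c - d)
       = four_root_norm (a^2) (b^2) (c^2) (d^2)"
  unfolding four_root_norm_def by algebra

lemma signed_sum_prod_pair_conj:
  fixes a :: "nat \<Rightarrow> 'a::idom"
  assumes "j \<noteq> k"
  shows "signed_sum_prod (t + c) a {j, k} * signed_sum_prod (t - c) a {j, k}
       = four_root_norm (t^2) (c^2) (a j ^ 2) (a k ^ 2)"
  unfolding signed_sum_prod_pair[OF assms] prod_signed_sums_four_roots[symmetric]
  by (simp only: mult.assoc)

lemma DeltaP_eq_four_root_norms: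
  "DeltaP x = four_root_norm (x 0) ((csqrt (x 3) + csqrt (x 4))^2) (x 1) (x 2)
            * four_root_norm (x 0) ((csqrt (x 3) - csqrt (x 4))^2) (x 1) (x 2)"
proof -
  let ?a = "\<lambda>j. csqrt (x j)"
  have conj: "signed_sum_prod (u + c) ?a {1, 2} * signed_sum_prod (u - c) ?a {1, 2}
      = four_root_norm (u^2) (c^2) (x 1) (x 2)" for u c
    using signed_sum_prod_pair_conj[of 1 2 u c ?a] by simp
  have "DeltaP x = signed_sum_prod (?a 0) ?a {1..4}"
    unfolding DeltaP_def signed_sum_prod_def ..
  then show ?thesis
    unfolding signed_sum_prod_four conj by simp
qed

lemma four_root_norm_as_cubic:
  fixes y0 z y1 y2 :: "'a::idom"
  shows "four_root_norm y0 z y1 y2 =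
    (z^2 - 2 * (y0 + y1 + y2) * z + (y0 + y1 + y2)^2 - 4 * (y0*y1 + y0*y2 + y1*y2))^2 - 64 * (y0*y1*y2) * z"
  unfolding four_root_norm_def by algebra

lemma discriminant_cubic:
  fixes y0 y1 y2 :: "'a::idom"
  shows "((y0 - y1) * (y0 - y2) * (y1 - y2))^2 =
    (y0 + y1 + y2)^2 * (y0*y1 + y0*y2 + y1*y2)^2 - 4 * (y0*y1 + y0*y2 + y1*y2)^3
    - 4 * (y0 + y1 + y2)^3 * (y0*y1*y2) + 18 * (y0 + y1 + y2) * (y0*y1 + y0*y2 + y1*y2) * (y0*y1*y2)
    - 27 * (y0*y1*y2)^2"
  by algebra

lemma quadric_elementary_symmetric:
  fixes x :: "nat \<Rightarrow> 'a::field_char_0"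
  assumes "lform x = 0" and "qform x = 0"
  shows "x 0 + x 1 + x 2 = 3 * (x 3 + x 4)"
    and "x 0 * x 1 + x 0 * x 2 + x 1 * x 2 = 3 * ((x 3 + x 4)^2 - x 3 * x 4)"
proof -
  show "x 0 + x 1 + x 2 = 3 * (x 3 + x 4)"
    using assms(1) unfolding lform_def by (simp add: algebra_simps)
  then have x0_eq: "x 0 = 3 * (x 3 + x 4) - x 1 - x 2" by (simp add: algebra_simps)
  have "qform x = 3 * (3 * ((x 3 + x 4)^2 - x 3 * x 4) - (x 0 * x 1 + x 0 * x 2 + x 1 * x 2))"
    unfolding qform_def x0_eq by algebra
  then show "x 0 * x 1 + x 0 * x 2 + x 1 * x 2 = 3 * ((x 3 + x 4)^2 - x 3 * x 4)"
    using assms(2) by (metis mult_eq_0_iff zero_neq_numeral eq_iff_diff_eq_0)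
qed

definition splitting_form :: "(nat \<Rightarrow> 'a::field_char_0) \<Rightarrow> 'a" where
  "splitting_form x = 64/3 * (x 0 - x 1) * (x 0 - x 2) * (x 1 - x 2) * (x 3 - x 4)"

lemma four_root_norms_on_quadric:
  fixes x :: "nat \<Rightarrow> 'a::field_char_0"
  assumes "lform x = 0" and "qform x = 0" and b: "b^2 = x 3 * x 4"
  shows "-3 * (four_root_norm (x 0) (x 3 + x 4 + 2 * b) (x 1) (x 2)
             * four_root_norm (x 0) (x 3 + x 4 - 2 * b) (x 1) (x 2)) = (splitting_form x)^2"
proof -
  define s e where "s = x 3 + x 4" and "e = x 0 * x 1 * x 2"
  have e1: "x 0 + x 1 + x 2 = 3 * s" and e2: "x 0 * x 1 + x 0 * x 2 + x 1 * x 2 = 3 * (s^2 - b^2)"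
    using quadric_elementary_symmetric[OF assms(1,2)] b unfolding s_def by simp_all
  have norm: "four_root_norm (x 0) z (x 1) (x 2) = (z^2 - 6 * s * z - 3 * s^2 + 12 * b^2)^2 - 64 * e * z" for z
    unfolding four_root_norm_as_cubic e1 e2 e_def by algebra
  have "four_root_norm (x 0) (s + 2 * b) (x 1) (x 2) * four_root_norm (x 0) (s - 2 * b) (x 1) (x 2)
      = 4096 * (s^2 - 4 * b^2) * ((s^3 - 3 * b^2 * s - e)^2 - 4 * b^6)"
    unfolding norm by algebra
  moreover have "s^2 - 4 * b^2 = (x 3 - x 4)^2"
    unfolding s_def b by algebra
  moreover have "((x 0 - x 1) * (x 0 - x 2) * (x 1 - x 2))^2 = -27 * ((s^3 - 3 * b^2 * s - e)^2 - 4 * b^6)"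
    unfolding discriminant_cubic e1 e2 e_def[symmetric] by algebra
  ultimately show ?thesis
    unfolding splitting_form_def s_def[symmetric] by (simp add: power_mult_distrib) algebra
qed

lemma neg3_DeltaP_on_quadric:
  assumes "lform x = 0" and "qform x = 0"
  shows "-3 * DeltaP x = (splitting_form x)^2"
proof -
  let ?b = "csqrt (x 3) * csqrt (x 4)"
  have "(csqrt (x 3) + csqrt (x 4))^2 = x 3 + x 4 + 2 * ?b"
    and "(csqrt (x 3) - csqrt (x 4))^2 = x 3 + x 4 - 2 * ?b"
    by (simp_all add: power2_sum power2_diff)
  moreover have "?b^2 = x 3 * x 4" by (simp add: power_mult_distrib)
  ultimately show ?thesis
    unfolding DeltaP_eq_four_root_norms using four_root_norms_on_quadric[OF assms] by simp
qed

definition monomial_coeffs :: "(rat \<times> nat list) list \<Rightarrow> (nat \<Rightarrow> nat) \<Rightarrow> rat" where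
  "monomial_coeffs ts e = (\<Sum>(r, m)\<leftarrow>ts. if e = nth_default 0 m then r else 0)"

lemma finite_monos5: "finite (monos5 d)"
proof (rule finite_subset)
  show "monos5 d \<subseteq> {e. \<forall>i. (i \<in> {..<5} \<longrightarrow> e i \<in> {0..d}) \<and> (i \<notin> {..<5} \<longrightarrow> e i = 0)}"
  proof
    fix e assume "e \<in> monos5 d"
    then have "sum e {..<5} = d" and "\<forall>i\<ge>5. e i = 0" by (auto simp: monos5_def)
    moreover have "e i \<le> sum e {..<5}" if "i < 5" for i
      using that by (intro member_le_sum) auto
    ultimately show "e \<in> {e. \<forall>i. (i \<in> {..<5} \<longrightarrow> e i \<in> {0..d}) \<and> (i \<notin> {..<5} \<longrightarrow> e i = 0)}"
      by auto
  qed
  show "finite {e. \<forall>i. (i \<in> {..<5::nat} \<longrightarrow> e i \<in> {0..d}) \<and> (i \<notin> {..<5} \<longrightarrow> e i = 0)}"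
    by (rule finite_set_of_finite_funs) auto
qed

lemma form_eval_add:
  "form_eval d (\<lambda>e. c e + c' e) x = form_eval d c x + form_eval d c' x"
  unfolding form_eval_def by (simp add: of_rat_add distrib_right sum.distrib)

lemma form_eval_monomial:
  assumes "e0 \<in> monos5 d"
  shows "form_eval d (\<lambda>e. if e = e0 then r else 0) x = of_rat r * (\<Prod>i<5. x i ^ e0 i)"
proof -
  have summand: "(\<lambda>e. of_rat (if e = e0 then r else 0) * (\<Prod>i<5. x i ^ e i))
      = (\<lambda>e. if e = e0 then of_rat r * (\<Prod>i<5. x i ^ e i) else 0)"
    by auto
  show ?thesis
    unfolding form_eval_def summand using assms finite_monos5 by simp
qed

lemma form_eval_monomial_coeffs:
  assumes "\<forall>(r, m) \<in> set ts. length m = 5 \<and> sum_list m = d"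
  shows "form_eval d (monomial_coeffs ts) x = (\<Sum>(r, m)\<leftarrow>ts. of_rat r * (\<Prod>i<5. x i ^ (m ! i)))"
  using assms
proof (induction ts)
  case Nil
  show ?case by (simp add: form_eval_def monomial_coeffs_def)
next
  case (Cons rm ts)
  obtain r m where rm: "rm = (r, m)" by fastforce
  with Cons.prems have len: "length m = 5" and sum: "sum_list m = d" by auto
  have "nth_default 0 m \<in> monos5 d"
    using len sum by (simp add: monos5_def nth_default_def sum_list_sum_nth atLeast0LessThan)
  moreover have "(\<Prod>i<5. x i ^ nth_default 0 m i) = (\<Prod>i<5. x i ^ (m ! i))"
    using len by (intro prod.cong) (simp_all add: nth_default_nth)
  moreover have "monomial_coeffs (rm # ts) = (\<lambda>e. (if e = nth_default 0 m then r else 0) + monomial_coeffs ts e)"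
    by (simp add: monomial_coeffs_def rm fun_eq_iff)
  ultimately show ?case
    using Cons by (simp add: form_eval_add form_eval_monomial rm)
qed

definition splitting_form_terms :: "(rat \<times> nat list) list" where
  "splitting_form_terms =
     [(64/3, [2,1,0,1,0]), (-64/3, [2,1,0,0,1]), (-64/3, [2,0,1,1,0]), (64/3, [2,0,1,0,1]),
      (-64/3, [1,2,0,1,0]), (64/3, [1,2,0,0,1]), (64/3, [1,0,2,1,0]), (-64/3, [1,0,2,0,1]),
      (64/3, [0,2,1,1,0]), (-64/3, [0,2,1,0,1]), (-64/3, [0,1,2,1,0]), (64/3, [0,1,2,0,1])]"

lemma form_eval_splitting_form_terms:
  "form_eval 4 (monomial_coeffs splitting_form_terms) x = splitting_form x"
proof -
  have "\<forall>(r, m) \<in> set splitting_form_terms. length m = 5 \<and> sum_list m = 4"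
    by (simp add: splitting_form_terms_def)
  then have "form_eval 4 (monomial_coeffs splitting_form_terms) x
      = (\<Sum>(r, m)\<leftarrow>splitting_form_terms. of_rat r * (\<Prod>i<5. x i ^ (m ! i)))"
    by (rule form_eval_monomial_coeffs)
  also have "\<dots> = splitting_form x"
  proof -
    have five: "{..<5::nat} = {0, 1, 2, 3, 4}" by auto
    show ?thesis
      by (simp add: five splitting_form_terms_def splitting_form_def of_rat_divide of_rat_minus) algebra
  qed
  finally show ?thesis .
qed

lemma lform_of_rat: "lform (\<lambda>i. of_rat (x i) :: 'a::field_char_0) = of_rat (lform x)"
  by (simp add: lform_def of_rat_add of_rat_diff of_rat_mult)

lemma qform_of_rat: "qform (\<lambda>i. of_rat (x i) :: 'a::field_char_0) = of_rat (qform x)"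
  by (simp add: qform_def of_rat_add of_rat_diff of_rat_mult of_rat_power)

lemma splitting_form_of_rat:
  "splitting_form (\<lambda>i. of_rat (x i) :: 'a::field_char_0) = of_rat (splitting_form x)"
  by (simp add: splitting_form_def of_rat_diff of_rat_mult of_rat_divide)

lemma neg3_DeltaP_at_rational_point:
  fixes x :: "nat \<Rightarrow> rat"
  assumes "lform x = 0" and "qform x = 0"
  shows "(of_rat (splitting_form x))^2 = -3 * DeltaP (\<lambda>i. of_rat (x i))"
  using neg3_DeltaP_on_quadric[of "\<lambda>i. of_rat (x i)"] assms
  by (simp add: lform_of_rat qform_of_rat splitting_form_of_rat)

definition weighted_orbit :: "rat \<Rightarrow> (nat \<Rightarrow> rat) \<Rightarrow> (rat \<times> (nat \<Rightarrow> rat)) set" where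
  "weighted_orbit w x = {(\<mu>^4 * w, \<lambda>i. \<mu> * x i) | \<mu>. \<mu> \<noteq> 0}"

lemma weighted_orbit_eqD:
  assumes "weighted_orbit w x = weighted_orbit w' y"
  shows "\<exists>\<mu>. x = (\<lambda>i. \<mu> * y i)"
proof -
  have "(w, x) \<in> weighted_orbit w x"
    unfolding weighted_orbit_def by (intro CollectI exI[of _ 1]) simp
  then have "(w, x) \<in> weighted_orbit w' y"
    by (simp only: assms)
  then show ?thesis
    unfolding weighted_orbit_def by blast
qed

lemma weighted_orbit_in_O_rat_points:
  assumes "\<forall>i\<ge>5. x i = 0" and "\<exists>i<5. x i \<noteq> 0"
    and "(of_rat w)^2 = -3 * DeltaP (\<lambda>i. of_rat (x i))"
  shows "weighted_orbit w x \<in> O_rat_points"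
  unfolding O_rat_points_def weighted_orbit_def
  by (intro CollectI exI[of _ w] exI[of _ x] conjI refl assms)

text \<open>The second intersection of \<open>Q\<close> with the line through its rational point \<open>(4,1,1,1,1)\<close>
  in direction \<open>(3 - t, t, 0, 1, 0)\<close>.\<close>
definition quadric_point :: "rat \<Rightarrow> nat \<Rightarrow> rat" where
  "quadric_point t i = (if i = 0 then t^2 + 3 else if i = 1 then 4 * t^2 - 6 * t + 3
     else if i = 2 then t^2 - 3 * t + 3 else if i = 3 then t^2 else if i = 4 then t^2 - 3 * t + 3 else 0)"

lemma quadric_point_on_quadric: "lform (quadric_point t) = 0" "qform (quadric_point t) = 0"
  unfolding lform_def qform_def quadric_point_def by (simp_all, algebra+)

lemma quadric_point_scaled_eq:
  assumes "quadric_point s = (\<lambda>i. \<mu> * quadric_point t i)"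
  shows "s = t"
proof -
  have "quadric_point s i = \<mu> * quadric_point t i" for i
    using assms by (rule fun_cong)
  from this[of 0] this[of 3] this[of 4]
  have x0: "s^2 + 3 = \<mu> * (t^2 + 3)" and x3: "s^2 = \<mu> * t^2" and x4: "s^2 - 3 * s + 3 = \<mu> * (t^2 - 3 * t + 3)"
    by (simp_all add: quadric_point_def)
  from x0 x3 have "\<mu> = 1" by (simp add: algebra_simps)
  with x3 x4 show "s = t" by simp
qed

lemma infinite_O_rat_points: "infinite O_rat_points"
proof -
  define orbit where "orbit t = weighted_orbit (splitting_form (quadric_point t)) (quadric_point t)" for t
  have "orbit t \<in> O_rat_points" for t
    unfolding orbit_def
  proof (rule weighted_orbit_in_O_rat_points)
    show "\<forall>i\<ge>5. quadric_point t i = 0" by (simp add: quadric_point_def)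
    have "0 \<le> t^2" by simp
    then have "t^2 + 3 \<noteq> 0" by linarith
    then have "quadric_point t 0 \<noteq> 0" by (simp add: quadric_point_def)
    then show "\<exists>i<5. quadric_point t i \<noteq> 0" by (intro exI[of _ 0]) simp
    show "(of_rat (splitting_form (quadric_point t)))^2 = -3 * DeltaP (\<lambda>i. of_rat (quadric_point t i))"
      by (intro neg3_DeltaP_at_rational_point quadric_point_on_quadric)
  qed
  then have "range orbit \<subseteq> O_rat_points" by blast
  moreover have "inj orbit"
  proof (rule injI)
    fix s t assume "orbit s = orbit t"
    then obtain \<mu> where "quadric_point s = (\<lambda>i. \<mu> * quadric_point t i)"
      unfolding orbit_def using weighted_orbit_eqD by blast
    then show "s = t" by (rule quadric_point_scaled_eq)
  qed
  then have "infinite (range orbit)"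
    using infinite_UNIV_char_0 finite_imageD by blast
  ultimately show ?thesis
    using infinite_super by blast
qed

theorem mainTheorem11:
  shows "(\<exists>c. \<forall>x::nat \<Rightarrow> complex. lform x = 0 \<and> qform x = 0 \<longrightarrow>
            -3 * DeltaP x = (form_eval 4 c x)^2)
       \<and> (\<forall>x::nat \<Rightarrow> rat. (\<exists>i<5. x i \<noteq> 0) \<and> lform x = 0 \<and> qform x = 0 \<longrightarrow>
            (\<exists>w::rat. (of_rat w)^2 = -3 * DeltaP (\<lambda>i. of_rat (x i))))
       \<and> infinite O_rat_points"
proof (intro conjI)
  show "\<exists>c. \<forall>x::nat \<Rightarrow> complex. lform x = 0 \<and> qform x = 0 \<longrightarrow> -3 * DeltaP x = (form_eval 4 c x)^2"
    using neg3_DeltaP_on_quadric unfolding form_eval_splitting_form_terms[symmetric] by blast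
  show "\<forall>x::nat \<Rightarrow> rat. (\<exists>i<5. x i \<noteq> 0) \<and> lform x = 0 \<and> qform x = 0 \<longrightarrow>
      (\<exists>w::rat. (of_rat w)^2 = -3 * DeltaP (\<lambda>i. of_rat (x i)))"
    using neg3_DeltaP_at_rational_point by blast
qed (rule infinite_O_rat_points)

end
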